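(* Let $P$ be a distribution on $\mathcal{X}$, $R>0$, $K>0$, and let $\overline{P}_e^{(n)}$ be the random-coding average error probability (codebook letters i.i.d. $P$) of the maximum-likelihood decoder, averaged over messages, codebooks and channel instances. Then \[ \limsup_{n\to\infty} -\tfrac1n\log\big[1-\overline{P}_e^{(n)}\big]\le E_c(P,R,K),\qquad E_c(P,R,K)=\min_{TV}\Big\{D(TV\|PW)+\big|R-A_{TV}-|B_{TV}-K|^{+}\big|^{+}\Big\}. \]
   Context: Channel model: $\mathcal{X},\mathcal{Y}$ finite alphabets, $W(y|x)$ a fixed conditional distribution. A codebook of block length $n$ has $\lfloor e^{nR}\rfloor$ codewords $\mathbf{x}_m\in\mathcal{X}^n$. A channel instance: independently for each message $m$, a cloud of $\lfloor e^{nK}\rfloor$ independent sequences $\mathbf{y}\in\mathcal{Y}^n$ whose letters are independent with $y_i\sim W(\cdot|x_{m,i})$. Messages are equiprobable; when $m$ is sent, the output is a uniformly chosen vector of the cloud of $m$. The decoder knows codebook and clouds; the ML decoder outputs a message whose cloud contains the most copies of the received vector (ties broken at random). Logs are natural. $TV$ is a joint distribution on $\mathcal{Y}\times\mathcal{X}$ with $\mathcal{Y}$-marginal $T$ and conditional $V(x|y)$; $PW$ is $P(x)W(y|x)$; $D(TV\|PW)=\sum T(y)V(x|y)\log\frac{T(y)V(x|y)}{P(x)W(y|x)}$; $A_{TV}=\sum T(y)V(x|y)\log\frac{V(x|y)}{P(x)}$; $B_{TV}=\mathbb{E}_{TV}[-\log W(Y|X)]$; $|t|^{+}=\max\{0,t\}$.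 *)

theory Defs
  imports "HOL-Analysis.Analysis"
begin

definition seqs :: "nat \<Rightarrow> 'a list set" where
  "seqs n = {xs. length xs = n}"

definition pos :: "real \<Rightarrow> real" where
  "pos t = max 0 t"

definition nmsg :: "real \<Rightarrow> nat \<Rightarrow> nat" where
  "nmsg R n = nat \<lfloor>exp (real n * R)\<rfloor>"

definition ncloud :: "real \<Rightarrow> nat \<Rightarrow> nat" where
  "ncloud K n = nat \<lfloor>exp (real n * K)\<rfloor>"

text \<open>Probability that the ML decoder (ties broken uniformly at random) outputs the
  correct message m, given the channel instance y (y (m',l') is the l'-th vector of
  the cloud of message m'), when m is sent and the l-th vector of its cloud is output.\<close>
definition ml_correct :: "nat \<Rightarrow> nat \<Rightarrow> (nat \<times> nat \<Rightarrow> 'y list) \<Rightarrow> nat \<Rightarrow> nat \<Rightarrow> real" where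
  "ml_correct M L y m l =
    (let v = y (m, l);
         cnt = (\<lambda>m'. card {l'. l' < L \<and> y (m', l') = v});
         mx = Max (cnt ` {..<M})
     in if cnt m = mx then 1 / real (card {m'. m' < M \<and> cnt m' = mx}) else 0)"

definition succ_prob :: "('x::finite \<Rightarrow> real) \<Rightarrow> ('x \<Rightarrow> 'y::finite \<Rightarrow> real)
    \<Rightarrow> real \<Rightarrow> real \<Rightarrow> nat \<Rightarrow> real" where
  "succ_prob P W R K n =
    (let M = nmsg R n; L = ncloud K n in
     \<Sum>c \<in> PiE {..<M} (\<lambda>_. (seqs n :: 'x list set)).
       (\<Prod>m<M. \<Prod>i<n. P (c m ! i)) *
       (\<Sum>y \<in> PiE ({..<M} \<times> {..<L}) (\<lambda>_. (seqs n :: 'y list set)).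
          (\<Prod>m<M. \<Prod>l<L. \<Prod>i<n. W (c m ! i) (y (m, l) ! i)) *
          (\<Sum>m<M. \<Sum>l<L. (1 / real M) * (1 / real L) * ml_correct M L y m l)))"

definition err_prob :: "('x::finite \<Rightarrow> real) \<Rightarrow> ('x \<Rightarrow> 'y::finite \<Rightarrow> real)
    \<Rightarrow> real \<Rightarrow> real \<Rightarrow> nat \<Rightarrow> real" where
  "err_prob P W R K n = 1 - succ_prob P W R K n"

text \<open>Joint distributions TV on Y x X, written Q y x = T(y) V(x|y).
  T(y) = sum_x Q y x, V(x|y) = Q y x / T y.  Terms with Q y x = 0 contribute 0.\<close>
definition divKL :: "('x::finite \<Rightarrow> real) \<Rightarrow> ('x \<Rightarrow> 'y::finite \<Rightarrow> real) \<Rightarrow> ('y \<Rightarrow> 'x \<Rightarrow> real) \<Rightarrow> real" where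
  "divKL P W Q = (\<Sum>y\<in>UNIV. \<Sum>x\<in>UNIV. if Q y x > 0 then Q y x * ln (Q y x / (P x * W x y)) else 0)"

definition A_TV :: "('x::finite \<Rightarrow> real) \<Rightarrow> ('y::finite \<Rightarrow> 'x \<Rightarrow> real) \<Rightarrow> real" where
  "A_TV P Q = (\<Sum>y\<in>UNIV. \<Sum>x\<in>UNIV. if Q y x > 0
      then Q y x * ln ((Q y x / (\<Sum>x'\<in>UNIV. Q y x')) / P x) else 0)"

definition B_TV :: "('x::finite \<Rightarrow> 'y::finite \<Rightarrow> real) \<Rightarrow> ('y \<Rightarrow> 'x \<Rightarrow> real) \<Rightarrow> real" where
  "B_TV W Q = (\<Sum>y\<in>UNIV. \<Sum>x\<in>UNIV. if Q y x > 0 then Q y x * (- ln (W x y)) else 0)"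

text \<open>Joint distributions absolutely continuous w.r.t. PW (outside this set the
  divergence is +infinity, so they never attain the minimum).\<close>
definition joint_dists :: "('x::finite \<Rightarrow> real) \<Rightarrow> ('x \<Rightarrow> 'y::finite \<Rightarrow> real) \<Rightarrow> ('y \<Rightarrow> 'x \<Rightarrow> real) set" where
  "joint_dists P W = {Q. (\<forall>y x. Q y x \<ge> 0) \<and> (\<Sum>y\<in>UNIV. \<Sum>x\<in>UNIV. Q y x) = 1 \<and>
                          (\<forall>y x. Q y x > 0 \<longrightarrow> P x * W x y > 0)}"

definition Ec :: "('x::finite \<Rightarrow> real) \<Rightarrow> ('x \<Rightarrow> 'y::finite \<Rightarrow> real) \<Rightarrow> real \<Rightarrow> real \<Rightarrow> real" where
  "Ec P W R K = Inf ((\<lambda>Q. divKL P W Q + pos (R - A_TV P Q - pos (B_TV W Q - K))) ` joint_dists P W)"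

end

theory Submission
  imports Defs
begin

text \<open>
  Fix a joint distribution Q = TV absolutely continuous with respect to PW, and call an output w and
  a codeword x typical if the empirical averages of the information densities ln (Q / PW),
  ln (V / P) and -ln W along (w, x) are within d of D, A and B.  Counting, for each output w, the
  copies of w in the clouds of messages whose codeword is typical with w, the ML decoder is right
  at least as often as the largest such count.  A tangent-line (second moment) argument on these
  counts gives, with mu(w) the probability that a random codeword is typical with w and produces w,
  and p(w) the probability that it is typical with w,
  P_c >= sum_w mu(w) / (1 + M min(L mu(w), p(w))).
  Typicality yields p <= exp(-n(A-d)) and mu <= exp(-n(B-d)) p, so the denominator is at most
  2 exp(n(|R - A - |B - K|^+|^+ + 2d)), and Chebyshev's inequality gives sum_w mu(w) >=
  exp(-n(D+d)) / 2.  Hence P_c >= exp(-n(D + |R - A - |B - K|^+|^+ + 3d)) / 4 for large n, and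
  minimising over Q gives the bound.
\<close>

subsection \<open>Sums over words of fixed length\<close>

lemma seqs_0 [simp]: "seqs 0 = {[]}"
  by (auto simp: seqs_def)

lemma seqs_Suc: "seqs (Suc n) = (\<lambda>(xs, a). xs @ [a]) ` (seqs n \<times> UNIV)"
proof -
  have "xs \<in> (\<lambda>(xs, a). xs @ [a]) ` (seqs n \<times> UNIV)" if "length xs = Suc n" for xs :: "'a list"
  proof (intro image_eqI[of _ _ "(butlast xs, last xs)"])
    show "xs = (case (butlast xs, last xs) of (xs, a) \<Rightarrow> xs @ [a])"
      using that by (metis append_butlast_last_id list.size(3) nat.distinct(1) prod.simps(2))
  qed (use that in \<open>auto simp: seqs_def\<close>)
  then show ?thesis
    by (auto simp: seqs_def)
qed

lemma finite_seqs [simp]: "finite (seqs n :: 'a::finite list set)"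
  by (induction n) (simp_all add: seqs_Suc)

lemma sum_seqs_Suc:
  "(\<Sum>xs\<in>seqs (Suc n). f xs) = (\<Sum>xs\<in>seqs n. \<Sum>a\<in>(UNIV::'a::finite set). f (xs @ [a]))"
  unfolding seqs_Suc
  by (subst sum.reindex) (auto simp: inj_on_def sum.cartesian_product split_def)

lemma nth_snoc_seqs [simp]: "xs \<in> seqs n \<Longrightarrow> (xs @ [a]) ! n = a"
  unfolding seqs_def by (simp add: nth_append)

lemma prod_snoc_seqs: "xs \<in> seqs n \<Longrightarrow> (\<Prod>i<n. F i ((xs @ [a]) ! i)) = (\<Prod>i<n. F i (xs ! i))"
  by (auto simp: seqs_def nth_append intro!: prod.cong)

lemma sum_snoc_seqs: "xs \<in> seqs n \<Longrightarrow> (\<Sum>i<n. F i ((xs @ [a]) ! i)) = (\<Sum>i<n. F i (xs ! i))"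
  by (auto simp: seqs_def nth_append intro!: sum.cong)

lemma sum_seqs_prod:
  fixes F :: "nat \<Rightarrow> 'a::finite \<Rightarrow> 'b::comm_semiring_1"
  shows "(\<Sum>xs\<in>seqs n. \<Prod>i<n. F i (xs ! i)) = (\<Prod>i<n. \<Sum>a\<in>UNIV. F i a)"
proof (induction n)
  case (Suc n)
  have "(\<Sum>xs\<in>seqs (Suc n). \<Prod>i<Suc n. F i (xs ! i))
      = (\<Sum>xs\<in>seqs n. \<Sum>a\<in>UNIV. (\<Prod>i<n. F i (xs ! i)) * F n a)"
    unfolding sum_seqs_Suc by (intro sum.cong refl) (simp add: prod_snoc_seqs)
  also have "\<dots> = (\<Sum>xs\<in>seqs n. \<Prod>i<n. F i (xs ! i)) * (\<Sum>a\<in>UNIV. F n a)"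
    by (simp add: sum_product)
  finally show ?case
    using Suc by simp
qed simp

lemma sum_UNIV_pair: "(\<Sum>z\<in>UNIV. f z) = (\<Sum>y\<in>UNIV. \<Sum>x\<in>UNIV. f (y, x))"
  by (simp add: sum.cartesian_product)

lemma sum_seqs_pairs:
  "(\<Sum>v\<in>seqs n. \<Sum>x\<in>seqs n. F v x) = (\<Sum>zs\<in>seqs n. F (map fst zs) (map snd zs))"
proof -
  have unzip: "bij_betw (\<lambda>zs. (map fst zs, map snd zs)) (seqs n) (seqs n \<times> seqs n)"
    by (rule bij_betw_byWitness[where f' = "\<lambda>(v, x). zip v x"])
      (auto simp: seqs_def zip_map_fst_snd)
  show ?thesis
    by (simp add: sum.cartesian_product sum.reindex_bij_betw[OF unzip, of "\<lambda>(v, x). F v x", symmetric])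
qed

subsection \<open>Sums of i.i.d. letters\<close>

definition iid :: "('a \<Rightarrow> real) \<Rightarrow> nat \<Rightarrow> 'a list \<Rightarrow> real" where
  "iid q n xs = (\<Prod>i<n. q (xs ! i))"

lemma iid_nonneg: "(\<And>a. q a \<ge> 0) \<Longrightarrow> iid q n xs \<ge> 0"
  by (simp add: iid_def prod_nonneg)

lemma sum_iid: "(\<Sum>xs\<in>seqs n. iid q n xs) = (\<Sum>a\<in>UNIV. q a) ^ n"
  for q :: "'a::finite \<Rightarrow> real"
  unfolding iid_def by (simp add: sum_seqs_prod[of "\<lambda>_. q"])

lemma iid_snoc: "xs \<in> seqs n \<Longrightarrow> iid q (Suc n) (xs @ [a]) = iid q n xs * q a"
  unfolding iid_def by (simp add: prod_snoc_seqs[where F = "\<lambda>_. q"])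

context
  fixes q h :: "'a::finite \<Rightarrow> real"
  assumes sum_q: "(\<Sum>z\<in>UNIV. q z) = 1" and mean_zero: "(\<Sum>z\<in>UNIV. q z * h z) = 0"
begin

lemma iid_sum_second_moment:
  "(\<Sum>zs\<in>seqs n. iid q n zs * (\<Sum>i<n. h (zs ! i))\<^sup>2) = real n * (\<Sum>z\<in>UNIV. q z * (h z)\<^sup>2)"
proof (induction n)
  case (Suc n)
  have "(\<Sum>zs\<in>seqs (Suc n). iid q (Suc n) zs * (\<Sum>i<Suc n. h (zs ! i))\<^sup>2)
      = (\<Sum>zs\<in>seqs n. \<Sum>a\<in>UNIV. iid q n zs * (\<Sum>i<n. h (zs ! i))\<^sup>2 * q a
          + 2 * (iid q n zs * (\<Sum>i<n. h (zs ! i))) * (q a * h a) + iid q n zs * (q a * (h a)\<^sup>2))"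
    unfolding sum_seqs_Suc
    by (intro sum.cong refl) (simp add: iid_snoc sum_snoc_seqs[where F = "\<lambda>_. h"] power2_eq_square algebra_simps)
  also have "\<dots> = (\<Sum>zs\<in>seqs n. iid q n zs * (\<Sum>i<n. h (zs ! i))\<^sup>2) * (\<Sum>a\<in>UNIV. q a)
      + (\<Sum>zs\<in>seqs n. 2 * (iid q n zs * (\<Sum>i<n. h (zs ! i)))) * (\<Sum>a\<in>UNIV. q a * h a)
      + (\<Sum>zs\<in>seqs n. iid q n zs) * (\<Sum>a\<in>UNIV. q a * (h a)\<^sup>2)"
    unfolding sum.distrib sum_product ..
  finally show ?case
    using Suc by (simp add: sum_q mean_zero sum_iid distrib_right)
qed simp

lemma iid_chebyshev:
  assumes q_nonneg: "\<And>z. q z \<ge> 0" and "n > 0" "d > 0"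
  shows "(\<Sum>zs\<in>seqs n. iid q n zs * of_bool (real n * d \<le> \<bar>\<Sum>i<n. h (zs ! i)\<bar>))
    \<le> (\<Sum>z\<in>UNIV. q z * (h z)\<^sup>2) / (real n * d\<^sup>2)"
proof -
  have "of_bool (real n * d \<le> \<bar>s\<bar>) \<le> s\<^sup>2 / (real n * d)\<^sup>2" for s :: real
  proof (cases "real n * d \<le> \<bar>s\<bar>")
    case True
    then have "(real n * d)\<^sup>2 \<le> s\<^sup>2"
      using assms by (metis abs_le_square_iff abs_of_pos mult_pos_pos of_nat_0_less_iff)
    then show ?thesis
      using assms by simp
  qed simp
  then have "(\<Sum>zs\<in>seqs n. iid q n zs * of_bool (real n * d \<le> \<bar>\<Sum>i<n. h (zs ! i)\<bar>))
      \<le> (\<Sum>zs\<in>seqs n. iid q n zs * ((\<Sum>i<n. h (zs ! i))\<^sup>2 / (real n * d)\<^sup>2))"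
    by (intro sum_mono mult_left_mono iid_nonneg q_nonneg)
  also have "\<dots> = (\<Sum>zs\<in>seqs n. iid q n zs * (\<Sum>i<n. h (zs ! i))\<^sup>2) / (real n * d)\<^sup>2"
    by (simp add: sum_divide_distrib)
  also have "\<dots> = (\<Sum>z\<in>UNIV. q z * (h z)\<^sup>2) / (real n * d\<^sup>2)"
    using assms by (simp only: iid_sum_second_moment) (simp add: power2_eq_square)
  finally show ?thesis .
qed

end

subsection \<open>The random-coding ensemble\<close>

definition memoryless :: "('a \<Rightarrow> 'b \<Rightarrow> real) \<Rightarrow> nat \<Rightarrow> 'a list \<Rightarrow> 'b list \<Rightarrow> real" where
  "memoryless W n x v = (\<Prod>i<n. W (x ! i) (v ! i))"

lemma memoryless_nonneg: "(\<And>a b. W a b \<ge> 0) \<Longrightarrow> memoryless W n x v \<ge> 0"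
  by (simp add: memoryless_def prod_nonneg)

lemma sum_memoryless: "(\<Sum>v\<in>seqs n. memoryless W n x v) = (\<Prod>i<n. \<Sum>b\<in>UNIV. W (x ! i) b)"
  for W :: "'a \<Rightarrow> 'b::finite \<Rightarrow> real"
  unfolding memoryless_def by (rule sum_seqs_prod)

definition ensemble_expect :: "('x::finite \<Rightarrow> real) \<Rightarrow> ('x \<Rightarrow> 'y::finite \<Rightarrow> real) \<Rightarrow> nat \<Rightarrow> nat \<Rightarrow> nat
    \<Rightarrow> ((nat \<Rightarrow> 'x list) \<Rightarrow> (nat \<times> nat \<Rightarrow> 'y list) \<Rightarrow> real) \<Rightarrow> real" where
  "ensemble_expect P W n M L F =
     (\<Sum>c \<in> PiE {..<M} (\<lambda>_. seqs n). (\<Prod>m<M. iid P n (c m)) *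
       (\<Sum>y \<in> PiE ({..<M} \<times> {..<L}) (\<lambda>_. seqs n).
          (\<Prod>m<M. \<Prod>l<L. memoryless W n (c m) (y (m, l))) * F c y))"

lemma succ_prob_eq_ensemble_expect:
  "succ_prob P W R K n = ensemble_expect P W n (nmsg R n) (ncloud K n)
     (\<lambda>c y. \<Sum>m<nmsg R n. \<Sum>l<ncloud K n. ml_correct (nmsg R n) (ncloud K n) y m l)
   / (real (nmsg R n) * real (ncloud K n))"
  unfolding succ_prob_def ensemble_expect_def iid_def memoryless_def Let_def
  by (simp add: sum_divide_distrib sum_distrib_left mult.assoc)

lemma ensemble_expect_sum:
  "finite S \<Longrightarrow> ensemble_expect P W n M L (\<lambda>c y. \<Sum>k\<in>S. F k c y) = (\<Sum>k\<in>S. ensemble_expect P W n M L (F k))"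
  unfolding ensemble_expect_def by (simp add: sum_distrib_left sum.swap[of _ S])

lemma ensemble_expect_cmult:
  "ensemble_expect P W n M L (\<lambda>c y. r * F c y) = r * ensemble_expect P W n M L F"
  unfolding ensemble_expect_def by (simp add: sum_distrib_left mult.left_commute)

lemma ensemble_expect_diff:
  "ensemble_expect P W n M L (\<lambda>c y. F c y - G c y) = ensemble_expect P W n M L F - ensemble_expect P W n M L G"
  unfolding ensemble_expect_def by (simp add: sum_subtractf right_diff_distrib)

lemma ensemble_expect_prod:
  "ensemble_expect P W n M L (\<lambda>c y. (\<Prod>m<M. \<alpha> m (c m)) * (\<Prod>m<M. \<Prod>l<L. \<phi> m l (y (m, l)))) =
    (\<Prod>m<M. \<Sum>x\<in>seqs n. iid P n x * \<alpha> m x * (\<Prod>l<L. \<Sum>v\<in>seqs n. memoryless W n x v * \<phi> m l v))"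
proof -
  have cloud: "(\<Sum>y \<in> PiE ({..<M} \<times> {..<L}) (\<lambda>_. seqs n).
        (\<Prod>m<M. \<Prod>l<L. memoryless W n (c m) (y (m, l))) * (\<Prod>m<M. \<Prod>l<L. \<phi> m l (y (m, l))))
     = (\<Prod>m<M. \<Prod>l<L. \<Sum>v\<in>seqs n. memoryless W n (c m) v * \<phi> m l v)" for c
  proof -
    have "(\<Prod>m<M. \<Prod>l<L. \<Sum>v\<in>seqs n. memoryless W n (c m) v * \<phi> m l v)
        = (\<Prod>ml\<in>{..<M} \<times> {..<L}. \<Sum>v\<in>seqs n. memoryless W n (c (fst ml)) v * \<phi> (fst ml) (snd ml) v)"
      by (simp add: prod.cartesian_product split_def)
    also have "\<dots> = (\<Sum>y \<in> PiE ({..<M} \<times> {..<L}) (\<lambda>_. seqs n).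
        \<Prod>ml\<in>{..<M} \<times> {..<L}. memoryless W n (c (fst ml)) (y ml) * \<phi> (fst ml) (snd ml) (y ml))"
      by (rule prod_sum_PiE) auto
    finally show ?thesis
      by (simp add: prod.cartesian_product prod.distrib split_def)
  qed
  have "ensemble_expect P W n M L (\<lambda>c y. (\<Prod>m<M. \<alpha> m (c m)) * (\<Prod>m<M. \<Prod>l<L. \<phi> m l (y (m, l))))
     = (\<Sum>c \<in> PiE {..<M} (\<lambda>_. seqs n). (\<Prod>m<M. iid P n (c m)) * ((\<Prod>m<M. \<alpha> m (c m)) *
          (\<Prod>m<M. \<Prod>l<L. \<Sum>v\<in>seqs n. memoryless W n (c m) v * \<phi> m l v)))"
    unfolding ensemble_expect_def cloud[symmetric]
    by (simp add: sum_distrib_left mult_ac)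
  also have "\<dots> = (\<Sum>c \<in> PiE {..<M} (\<lambda>_. seqs n).
          \<Prod>m<M. iid P n (c m) * \<alpha> m (c m) * (\<Prod>l<L. \<Sum>v\<in>seqs n. memoryless W n (c m) v * \<phi> m l v))"
    by (simp add: prod.distrib mult.assoc)
  also have "\<dots> = (\<Prod>m<M. \<Sum>x\<in>seqs n. iid P n x * \<alpha> m x * (\<Prod>l<L. \<Sum>v\<in>seqs n. memoryless W n x v * \<phi> m l v))"
    by (rule prod_sum_PiE[symmetric]) auto
  finally show ?thesis .
qed

locale prob_channel =
  fixes P :: "'x::finite \<Rightarrow> real" and W :: "'x \<Rightarrow> 'y::finite \<Rightarrow> real"
  assumes P_nonneg: "\<And>x. P x \<ge> 0" and sum_P: "(\<Sum>x\<in>UNIV. P x) = 1"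
    and W_nonneg: "\<And>x y. W x y \<ge> 0" and sum_W: "\<And>x. (\<Sum>y\<in>UNIV. W x y) = 1"
begin

lemma sum_iid_P [simp]: "(\<Sum>x\<in>seqs n. iid P n x) = 1"
  by (simp add: sum_iid sum_P)

lemma sum_memoryless_W [simp]: "(\<Sum>v\<in>seqs n. memoryless W n x v) = 1"
  by (simp add: sum_memoryless sum_W)

lemma ensemble_expect_mono:
  assumes "\<And>c y. c \<in> PiE {..<M} (\<lambda>_. seqs n) \<Longrightarrow> y \<in> PiE ({..<M} \<times> {..<L}) (\<lambda>_. seqs n) \<Longrightarrow> F c y \<le> G c y"
  shows "ensemble_expect P W n M L F \<le> ensemble_expect P W n M L G"
  unfolding ensemble_expect_def using assms
  by (intro sum_mono mult_left_mono prod_nonneg sum_nonneg iid_nonneg memoryless_nonneg P_nonneg W_nonneg) auto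

definition cell_mean :: "nat \<Rightarrow> ('x list \<Rightarrow> real) \<Rightarrow> ('y list \<Rightarrow> real) \<Rightarrow> real" where
  "cell_mean n \<alpha> \<phi> = (\<Sum>x\<in>seqs n. iid P n x * \<alpha> x * (\<Sum>v\<in>seqs n. memoryless W n x v * \<phi> v))"

lemma ensemble_expect_cells:
  assumes S: "S \<subseteq> {..<M}" and cell: "\<And>m. m \<in> S \<Longrightarrow> cell m < L"
  shows "ensemble_expect P W n M L (\<lambda>c y. \<Prod>m\<in>S. \<alpha> m (c m) * \<phi> m (y (m, cell m)))
    = (\<Prod>m\<in>S. cell_mean n (\<alpha> m) (\<phi> m))"
proof -
  define \<alpha>' where "\<alpha>' m x = (if m \<in> S then \<alpha> m x else 1)" for m x
  define \<phi>' where "\<phi>' m l v = (if m \<in> S \<and> l = cell m then \<phi> m v else 1)" for m l v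
  have restrict: "(\<Prod>m<M. if m \<in> S then f m else 1) = (\<Prod>m\<in>S. f m)" for f :: "nat \<Rightarrow> real"
    using S by (simp add: prod.inter_restrict[symmetric] Int_absorb1)
  have row: "(\<Sum>x\<in>seqs n. iid P n x * \<alpha>' m x * (\<Prod>l<L. \<Sum>v\<in>seqs n. memoryless W n x v * \<phi>' m l v))
      = (if m \<in> S then cell_mean n (\<alpha> m) (\<phi> m) else 1)" for m
  proof -
    have "(\<Sum>v\<in>seqs n. memoryless W n x v * \<phi>' m l v)
        = (if m \<in> S \<and> l = cell m then \<Sum>v\<in>seqs n. memoryless W n x v * \<phi> m v else 1)" for x l
      by (auto simp: \<phi>'_def)
    then have "(\<Prod>l<L. \<Sum>v\<in>seqs n. memoryless W n x v * \<phi>' m l v)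
        = (if m \<in> S then \<Sum>v\<in>seqs n. memoryless W n x v * \<phi> m v else 1)" for x
      using cell by auto
    then show ?thesis
      by (simp add: \<alpha>'_def cell_mean_def)
  qed
  have "(\<Prod>m\<in>S. \<alpha> m (c m) * \<phi> m (y (m, cell m)))
      = (\<Prod>m<M. \<alpha>' m (c m)) * (\<Prod>m<M. \<Prod>l<L. \<phi>' m l (y (m, l)))" for c y
  proof -
    have "(\<Prod>l<L. \<phi>' m l (y (m, l))) = (if m \<in> S then \<phi> m (y (m, cell m)) else 1)" for m
      using cell by (auto simp: \<phi>'_def)
    then show ?thesis
      by (simp add: \<alpha>'_def restrict prod.distrib if_distrib[of "\<lambda>u. u * _"] cong: if_cong)
  qed
  then have "ensemble_expect P W n M L (\<lambda>c y. \<Prod>m\<in>S. \<alpha> m (c m) * \<phi> m (y (m, cell m)))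
      = (\<Prod>m<M. if m \<in> S then cell_mean n (\<alpha> m) (\<phi> m) else 1)"
    by (simp add: ensemble_expect_prod row)
  then show ?thesis
    by (simp add: restrict)
qed

end

subsection \<open>Counting correct decisions of the ML decoder\<close>

definition cloud_count :: "nat \<Rightarrow> (nat \<times> nat \<Rightarrow> 'y list) \<Rightarrow> nat \<Rightarrow> 'y list \<Rightarrow> nat" where
  "cloud_count L y m w = card {l. l < L \<and> y (m, l) = w}"

lemma sum_if_eq_card: "(\<Sum>l<(L::nat). if Q l then c else 0) = real (card {l. l < L \<and> Q l}) * (c::real)"
proof -
  have "{..<L} \<inter> {l. Q l} = {l. l < L \<and> Q l}"
    by auto
  then show ?thesis
    by (simp add: sum.If_cases)
qed

lemma sum_ml_correct:
  assumes M: "M \<ge> 1" and y: "\<And>m l. m < M \<Longrightarrow> l < L \<Longrightarrow> y (m, l) \<in> (seqs n :: 'y::finite list set)"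
  shows "(\<Sum>m<M. \<Sum>l<L. ml_correct M L y m l)
     = (\<Sum>w\<in>seqs n. real (Max ((\<lambda>m. cloud_count L y m w) ` {..<M})))"
proof -
  define mx where "mx w = Max ((\<lambda>m. cloud_count L y m w) ` {..<M})" for w
  define f where "f m w = (if cloud_count L y m w = mx w
      then 1 / real (card {m'. m' < M \<and> cloud_count L y m' w = mx w}) else 0)" for m w
  have cloud: "(\<Sum>l<L. f m (y (m, l))) = (\<Sum>w\<in>seqs n. real (cloud_count L y m w) * f m w)" if "m < M" for m
  proof -
    have "(\<Sum>l<L. f m (y (m, l))) = (\<Sum>l<L. \<Sum>w\<in>seqs n. if y (m, l) = w then f m w else 0)"
      using y[OF that] by (intro sum.cong refl) simp
    also have "\<dots> = (\<Sum>w\<in>seqs n. real (cloud_count L y m w) * f m w)"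
      by (subst sum.swap) (simp add: sum_if_eq_card cloud_count_def)
    finally show ?thesis .
  qed
  have winners: "(\<Sum>m<M. real (cloud_count L y m w) * f m w) = real (mx w)" for w
  proof -
    define T where "T = {m. m < M \<and> cloud_count L y m w = mx w}"
    have "mx w \<in> (\<lambda>m. cloud_count L y m w) ` {..<M}"
      unfolding mx_def using M by (intro Max_in) (auto simp: lessThan_empty_iff)
    then have "card T > 0"
      unfolding T_def by (auto simp: card_gt_0_iff)
    moreover have "(\<Sum>m<M. real (cloud_count L y m w) * f m w) = (\<Sum>m<M. if m \<in> T then real (mx w) / real (card T) else 0)"
      by (intro sum.cong refl) (auto simp: f_def T_def)
    moreover have "{m. m < M \<and> m \<in> T} = T"
      unfolding T_def by auto
    ultimately show ?thesis
      by (simp add: sum_if_eq_card)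
  qed
  have "ml_correct M L y m l = f m (y (m, l))" for m l
    unfolding ml_correct_def Let_def f_def mx_def cloud_count_def ..
  then have "(\<Sum>m<M. \<Sum>l<L. ml_correct M L y m l) = (\<Sum>m<M. \<Sum>w\<in>seqs n. real (cloud_count L y m w) * f m w)"
    by (simp add: cloud)
  also have "\<dots> = (\<Sum>w\<in>seqs n. real (mx w))"
    by (subst sum.swap) (simp add: winners)
  finally show ?thesis
    unfolding mx_def .
qed

lemma sum_share_le:
  fixes a :: "'i \<Rightarrow> real"
  assumes "finite I" "\<And>i. i \<in> I \<Longrightarrow> a i \<ge> 0" and a_le: "\<And>i. i \<in> I \<Longrightarrow> a i \<le> U" and "U \<ge> 0"
  shows "(\<Sum>i\<in>I. a i / (1 + real (card {j \<in> I - {i}. a j > 0}))) \<le> U"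
proof -
  define J where "J = {i \<in> I. a i > 0}"
  have "finite J"
    using assms unfolding J_def by auto
  have card_others: "1 + real (card {j \<in> I - {i}. a j > 0}) = real (card J)" if "i \<in> J" for i
  proof -
    have "{j \<in> I - {i}. a j > 0} = J - {i}"
      unfolding J_def by auto
    moreover have "card J \<ge> 1"
      using that \<open>finite J\<close> by (metis One_nat_def Suc_leI card_gt_0_iff empty_iff)
    ultimately show ?thesis
      using that \<open>finite J\<close> by simp
  qed
  have "(\<Sum>i\<in>I. a i / (1 + real (card {j \<in> I - {i}. a j > 0})))
      = (\<Sum>i\<in>J. a i / (1 + real (card {j \<in> I - {i}. a j > 0})))"
    using assms by (intro sum.mono_neutral_right) (auto simp: J_def antisym_conv2)
  also have "\<dots> = (\<Sum>i\<in>J. a i / real (card J))"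
    by (rule sum.cong) (simp_all only: card_others)
  also have "\<dots> \<le> (\<Sum>i\<in>J. U / real (card J))"
    using a_le unfolding J_def by (intro sum_mono divide_right_mono) auto
  also have "\<dots> \<le> U"
    using \<open>U \<ge> 0\<close> by (cases "card J = 0") auto
  finally show ?thesis .
qed

lemma tangent_le_inverse:
  fixes a N \<alpha> :: real
  assumes "a \<ge> 0" "N \<ge> 0" "\<alpha> \<ge> 0"
  shows "a * (1 + 2 * \<alpha> - N) / (1 + \<alpha>)\<^sup>2 \<le> a / (1 + N)"
proof -
  have "(1 + \<alpha>)\<^sup>2 - (1 + 2 * \<alpha> - N) * (1 + N) = (\<alpha> - N)\<^sup>2"
    by (simp add: power2_eq_square algebra_simps)
  then have "(1 + 2 * \<alpha> - N) / (1 + \<alpha>)\<^sup>2 \<le> 1 / (1 + N)"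
    using assms by (simp add: field_simps)
  then show ?thesis
    using mult_left_mono[OF _ \<open>a \<ge> 0\<close>] by fastforce
qed

definition hits :: "('y list \<Rightarrow> 'x list \<Rightarrow> bool) \<Rightarrow> nat \<Rightarrow> (nat \<Rightarrow> 'x list) \<Rightarrow> (nat \<times> nat \<Rightarrow> 'y list)
    \<Rightarrow> nat \<Rightarrow> 'y list \<Rightarrow> real" where
  "hits G L c y m w = of_bool (G w (c m)) * real (cloud_count L y m w)"

definition rivals :: "('y list \<Rightarrow> 'x list \<Rightarrow> bool) \<Rightarrow> nat \<Rightarrow> nat \<Rightarrow> (nat \<Rightarrow> 'x list) \<Rightarrow> (nat \<times> nat \<Rightarrow> 'y list)
    \<Rightarrow> nat \<Rightarrow> 'y list \<Rightarrow> real" where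
  "rivals G M L c y m w = real (card {m' \<in> {..<M} - {m}. hits G L c y m' w > 0})"

lemma hits_nonneg: "hits G L c y m w \<ge> 0"
  by (simp add: hits_def)

lemma rivals_nonneg: "rivals G M L c y m w \<ge> 0"
  by (simp add: rivals_def)

lemma ml_correct_ge_hits:
  assumes M: "M \<ge> 1" and y: "\<And>m l. m < M \<Longrightarrow> l < L \<Longrightarrow> y (m, l) \<in> (seqs n :: 'y::finite list set)"
    and \<alpha>: "\<And>w. \<alpha> w \<ge> 0"
  shows "(\<Sum>w\<in>seqs n. \<Sum>m<M. hits G L c y m w * (1 + 2 * \<alpha> w - rivals G M L c y m w) / (1 + \<alpha> w)\<^sup>2)
    \<le> (\<Sum>m<M. \<Sum>l<L. ml_correct M L y m l)"
proof -
  have "(\<Sum>m<M. hits G L c y m w * (1 + 2 * \<alpha> w - rivals G M L c y m w) / (1 + \<alpha> w)\<^sup>2)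
      \<le> real (Max ((\<lambda>m. cloud_count L y m w) ` {..<M}))" for w
  proof -
    have "(\<Sum>m<M. hits G L c y m w * (1 + 2 * \<alpha> w - rivals G M L c y m w) / (1 + \<alpha> w)\<^sup>2)
        \<le> (\<Sum>m<M. hits G L c y m w / (1 + rivals G M L c y m w))"
      by (intro sum_mono tangent_le_inverse hits_nonneg rivals_nonneg \<alpha>)
    also have "\<dots> \<le> real (Max ((\<lambda>m. cloud_count L y m w) ` {..<M}))"
      unfolding rivals_def
    proof (rule sum_share_le)
      show "hits G L c y m w \<le> real (Max ((\<lambda>m. cloud_count L y m w) ` {..<M}))" if "m \<in> {..<M}" for m
        using that by (auto simp: hits_def)
    qed (auto simp: hits_nonneg)
    finally show ?thesis .
  qed
  then show ?thesis
    by (simp add: sum_ml_correct[of M L y n, OF M y] sum_mono)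
qed

subsection \<open>A lower bound on the ML success probability\<close>

context prob_channel
begin

lemma ensemble_expect_one_cell:
  assumes "m < M" "l < L"
  shows "ensemble_expect P W n M L (\<lambda>c y. \<alpha> (c m) * \<phi> (y (m, l))) = cell_mean n \<alpha> \<phi>"
  using ensemble_expect_cells[of "{m}" M "\<lambda>_. l" L n "\<lambda>_. \<alpha>" "\<lambda>_. \<phi>"] assms by simp

lemma ensemble_expect_two_cells:
  assumes "m < M" "m' < M" "m \<noteq> m'" "l < L" "l' < L"
  shows "ensemble_expect P W n M L (\<lambda>c y. \<alpha> (c m) * \<phi> (y (m, l)) * (\<beta> (c m') * \<psi> (y (m', l'))))
    = cell_mean n \<alpha> \<phi> * cell_mean n \<beta> \<psi>"
  using ensemble_expect_cells[of "{m, m'}" M "\<lambda>k. if k = m then l else l'" L n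
      "\<lambda>k. if k = m then \<alpha> else \<beta>" "\<lambda>k. if k = m then \<phi> else \<psi>"] assms
  by simp

definition joint_mass :: "nat \<Rightarrow> ('y list \<Rightarrow> 'x list \<Rightarrow> bool) \<Rightarrow> 'y list \<Rightarrow> real" where
  "joint_mass n G w = (\<Sum>x\<in>seqs n. iid P n x * of_bool (G w x) * memoryless W n x w)"

definition input_mass :: "nat \<Rightarrow> ('y list \<Rightarrow> 'x list \<Rightarrow> bool) \<Rightarrow> 'y list \<Rightarrow> real" where
  "input_mass n G w = (\<Sum>x\<in>seqs n. iid P n x * of_bool (G w x))"

lemma joint_mass_nonneg: "joint_mass n G w \<ge> 0"
  unfolding joint_mass_def
  by (intro sum_nonneg mult_nonneg_nonneg iid_nonneg memoryless_nonneg P_nonneg W_nonneg) auto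

lemma input_mass_nonneg: "input_mass n G w \<ge> 0"
  unfolding input_mass_def by (intro sum_nonneg mult_nonneg_nonneg iid_nonneg P_nonneg) auto

lemma cell_mean_hit: "w \<in> seqs n \<Longrightarrow> cell_mean n (\<lambda>x. of_bool (G w x)) (\<lambda>v. of_bool (v = w)) = joint_mass n G w"
  by (simp add: cell_mean_def joint_mass_def)

lemma cell_mean_test: "cell_mean n (\<lambda>x. of_bool (G w x)) (\<lambda>_. 1) = input_mass n G w"
  by (simp add: cell_mean_def input_mass_def)

lemma hits_eq_sum: "hits G L c y m w = (\<Sum>l<L. of_bool (G w (c m)) * of_bool (y (m, l) = w))"
proof -
  have "{..<L} \<inter> {l. y (m, l) = w} = {l. l < L \<and> y (m, l) = w}"
    by auto
  then show ?thesis
    by (simp add: hits_def cloud_count_def sum_distrib_left[symmetric])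
qed

lemma ensemble_expect_hits:
  assumes "m < M" "w \<in> seqs n"
  shows "ensemble_expect P W n M L (\<lambda>c y. hits G L c y m w) = real L * joint_mass n G w"
proof -
  have "ensemble_expect P W n M L (\<lambda>c y. hits G L c y m w)
      = (\<Sum>l<L. ensemble_expect P W n M L (\<lambda>c y. of_bool (G w (c m)) * of_bool (y (m, l) = w)))"
    unfolding hits_eq_sum by (rule ensemble_expect_sum) simp
  also have "\<dots> = (\<Sum>l<L. joint_mass n G w)"
    using assms ensemble_expect_one_cell[where \<alpha> = "\<lambda>x. of_bool (G w x)" and \<phi> = "\<lambda>v. of_bool (v = w)"]
    by (intro sum.cong refl) (simp add: cell_mean_hit)
  finally show ?thesis
    by simp
qed

lemma ensemble_expect_hits_hits:
  assumes "m < M" "m' < M" "m \<noteq> m'" "w \<in> seqs n"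
  shows "ensemble_expect P W n M L (\<lambda>c y. hits G L c y m w * hits G L c y m' w) = (real L * joint_mass n G w)\<^sup>2"
proof -
  have "ensemble_expect P W n M L (\<lambda>c y. hits G L c y m w * hits G L c y m' w)
      = (\<Sum>l<L. \<Sum>l'<L. ensemble_expect P W n M L (\<lambda>c y. of_bool (G w (c m)) * of_bool (y (m, l) = w)
          * (of_bool (G w (c m')) * of_bool (y (m', l') = w))))"
    unfolding hits_eq_sum sum_product by (simp only: ensemble_expect_sum finite_lessThan)
  also have "\<dots> = (\<Sum>l<L. \<Sum>l'<L. joint_mass n G w * joint_mass n G w)"
    using assms by (intro sum.cong refl)
      (subst ensemble_expect_two_cells[where \<alpha> = "\<lambda>x. of_bool (G w x)" and \<phi> = "\<lambda>v. of_bool (v = w)"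
          and \<beta> = "\<lambda>x. of_bool (G w x)" and \<psi> = "\<lambda>v. of_bool (v = w)"], auto simp: cell_mean_hit)
  finally show ?thesis
    by (simp add: power2_eq_square)
qed

lemma ensemble_expect_hits_test:
  assumes "m < M" "m' < M" "m \<noteq> m'" "w \<in> seqs n" "L \<ge> 1"
  shows "ensemble_expect P W n M L (\<lambda>c y. hits G L c y m w * of_bool (G w (c m')))
    = real L * joint_mass n G w * input_mass n G w"
proof -
  have "ensemble_expect P W n M L (\<lambda>c y. hits G L c y m w * of_bool (G w (c m')))
      = (\<Sum>l<L. ensemble_expect P W n M L
           (\<lambda>c y. of_bool (G w (c m)) * of_bool (y (m, l) = w) * (of_bool (G w (c m')) * 1)))"
    unfolding hits_eq_sum sum_distrib_right mult_1_right by (rule ensemble_expect_sum) simp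
  also have "\<dots> = (\<Sum>l<L. joint_mass n G w * input_mass n G w)"
    using assms by (intro sum.cong refl)
      (subst ensemble_expect_two_cells[where \<alpha> = "\<lambda>x. of_bool (G w x)" and \<phi> = "\<lambda>v. of_bool (v = w)"
          and \<beta> = "\<lambda>x. of_bool (G w x)" and \<psi> = "\<lambda>_. 1" and l' = 0], auto simp: cell_mean_hit cell_mean_test)
  finally show ?thesis
    by simp
qed

lemma rivals_eq_sum: "rivals G M L c y m w = (\<Sum>m'\<in>{..<M} - {m}. of_bool (hits G L c y m' w > 0))"
  by (simp add: rivals_def Int_def)

lemma ensemble_expect_hits_rivals:
  assumes "m < M" "w \<in> seqs n" "L \<ge> 1"
  shows "ensemble_expect P W n M L (\<lambda>c y. hits G L c y m w * rivals G M L c y m w)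
    \<le> real M * (real L * joint_mass n G w * min (real L * joint_mass n G w) (input_mass n G w))"
proof -
  let ?\<mu> = "joint_mass n G w" and ?p = "input_mass n G w"
  have rival: "ensemble_expect P W n M L (\<lambda>c y. hits G L c y m w * of_bool (hits G L c y m' w > 0))
      \<le> real L * ?\<mu> * min (real L * ?\<mu>) ?p" if "m' \<in> {..<M} - {m}" for m'
  proof -
    have "of_bool (hits G L c y m' w > 0) \<le> hits G L c y m' w"
      and "of_bool (hits G L c y m' w > 0) \<le> (of_bool (G w (c m')) :: real)" for c y
      by (auto simp: hits_def)
    then have "ensemble_expect P W n M L (\<lambda>c y. hits G L c y m w * of_bool (hits G L c y m' w > 0))
        \<le> ensemble_expect P W n M L (\<lambda>c y. hits G L c y m w * hits G L c y m' w)"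
      and "ensemble_expect P W n M L (\<lambda>c y. hits G L c y m w * of_bool (hits G L c y m' w > 0))
        \<le> ensemble_expect P W n M L (\<lambda>c y. hits G L c y m w * of_bool (G w (c m')))"
      by (intro ensemble_expect_mono mult_left_mono hits_nonneg; simp)+
    then show ?thesis
      using that assms by (simp add: ensemble_expect_hits_hits ensemble_expect_hits_test power2_eq_square)
  qed
  have "ensemble_expect P W n M L (\<lambda>c y. hits G L c y m w * rivals G M L c y m w)
      = (\<Sum>m'\<in>{..<M} - {m}. ensemble_expect P W n M L (\<lambda>c y. hits G L c y m w * of_bool (hits G L c y m' w > 0)))"
    unfolding rivals_eq_sum sum_distrib_left by (rule ensemble_expect_sum) simp
  also have "\<dots> \<le> real (M - 1) * (real L * ?\<mu> * min (real L * ?\<mu>) ?p)"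
    using sum_mono[of "{..<M} - {m}", OF rival] assms by simp
  also have "\<dots> \<le> real M * (real L * ?\<mu> * min (real L * ?\<mu>) ?p)"
    by (intro mult_right_mono) (auto simp: joint_mass_nonneg input_mass_nonneg)
  finally show ?thesis .
qed

lemma ensemble_expect_tangent_ge:
  assumes "m < M" "w \<in> seqs n" "L \<ge> 1"
    and \<alpha>: "\<alpha> = real M * min (real L * joint_mass n G w) (input_mass n G w)"
  shows "real L * joint_mass n G w / (1 + \<alpha>)
    \<le> ensemble_expect P W n M L (\<lambda>c y. hits G L c y m w * (1 + 2 * \<alpha> - rivals G M L c y m w) / (1 + \<alpha>)\<^sup>2)"
proof -
  let ?\<mu> = "joint_mass n G w"
  have "1 + \<alpha> > 0"
    using \<alpha> by (simp add: add_pos_nonneg joint_mass_nonneg input_mass_nonneg)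
  have "(\<lambda>c y. hits G L c y m w * (1 + 2 * \<alpha> - rivals G M L c y m w) / (1 + \<alpha>)\<^sup>2)
      = (\<lambda>c y. ((1 + 2 * \<alpha>) / (1 + \<alpha>)\<^sup>2) * hits G L c y m w
        - (1 / (1 + \<alpha>)\<^sup>2) * (hits G L c y m w * rivals G M L c y m w))"
    by (simp add: fun_eq_iff diff_divide_distrib right_diff_distrib mult.commute)
  then have "ensemble_expect P W n M L (\<lambda>c y. hits G L c y m w * (1 + 2 * \<alpha> - rivals G M L c y m w) / (1 + \<alpha>)\<^sup>2)
      = ((1 + 2 * \<alpha>) * (real L * ?\<mu>)
        - ensemble_expect P W n M L (\<lambda>c y. hits G L c y m w * rivals G M L c y m w)) / (1 + \<alpha>)\<^sup>2"
    using assms by (simp only: ensemble_expect_diff ensemble_expect_cmult ensemble_expect_hits)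
      (simp add: diff_divide_distrib)
  also have "\<dots> \<ge> ((1 + 2 * \<alpha>) * (real L * ?\<mu>) - real L * ?\<mu> * \<alpha>) / (1 + \<alpha>)\<^sup>2"
    using ensemble_expect_hits_rivals[OF assms(1-3), of G] \<alpha>
    by (intro divide_right_mono) (simp_all add: mult_ac)
  moreover have "((1 + 2 * \<alpha>) * (real L * ?\<mu>) - real L * ?\<mu> * \<alpha>) / (1 + \<alpha>)\<^sup>2 = real L * ?\<mu> / (1 + \<alpha>)"
  proof -
    have "(1 + 2 * \<alpha>) * (real L * ?\<mu>) - real L * ?\<mu> * \<alpha> = real L * ?\<mu> * (1 + \<alpha>)"
      by (simp add: algebra_simps)
    then show ?thesis
      using \<open>1 + \<alpha> > 0\<close> by (simp add: power2_eq_square)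
  qed
  ultimately show ?thesis
    by simp
qed

theorem ensemble_expect_ml_correct_ge:
  assumes M: "M \<ge> 1" and L: "L \<ge> 1"
  shows "real M * real L * (\<Sum>w\<in>seqs n.
      joint_mass n G w / (1 + real M * min (real L * joint_mass n G w) (input_mass n G w)))
    \<le> ensemble_expect P W n M L (\<lambda>c y. \<Sum>m<M. \<Sum>l<L. ml_correct M L y m l)"
proof -
  txt \<open>Since L mu(w) alpha(w) bounds the mean of hits times rivals, alpha(w) is the point at which
    to take the tangent in ml_correct_ge_hits.\<close>
  define \<alpha> where "\<alpha> w = real M * min (real L * joint_mass n G w) (input_mass n G w)" for w
  have \<alpha>_nonneg: "\<alpha> w \<ge> 0" for w
    by (simp add: \<alpha>_def joint_mass_nonneg input_mass_nonneg)
  let ?F = "\<lambda>w m c y. hits G L c y m w * (1 + 2 * \<alpha> w - rivals G M L c y m w) / (1 + \<alpha> w)\<^sup>2"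
  have "real M * real L * (\<Sum>w\<in>seqs n. joint_mass n G w / (1 + \<alpha> w))
      = (\<Sum>w\<in>seqs n. real M * real L * (joint_mass n G w / (1 + \<alpha> w)))"
    by (rule sum_distrib_left)
  also have "\<dots> = (\<Sum>w\<in>seqs n. \<Sum>m<M. real L * joint_mass n G w / (1 + \<alpha> w))"
    by (simp add: mult.assoc)
  also have "\<dots> \<le> (\<Sum>w\<in>seqs n. \<Sum>m<M. ensemble_expect P W n M L (?F w m))"
    using L by (intro sum_mono ensemble_expect_tangent_ge) (auto simp: \<alpha>_def)
  also have "\<dots> = ensemble_expect P W n M L (\<lambda>c y. \<Sum>w\<in>seqs n. \<Sum>m<M. ?F w m c y)"
    by (simp add: ensemble_expect_sum)
  also have "\<dots> \<le> ensemble_expect P W n M L (\<lambda>c y. \<Sum>m<M. \<Sum>l<L. ml_correct M L y m l)"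
    by (intro ensemble_expect_mono ml_correct_ge_hits M \<alpha>_nonneg) (auto simp: PiE_iff)
  finally show ?thesis
    by (simp add: \<alpha>_def)
qed

end

subsection \<open>Typical pairs of a joint type\<close>

lemma prod_le_exp_mult_prod:
  fixes f g :: "nat \<Rightarrow> real"
  assumes "\<And>i. i < n \<Longrightarrow> f i > 0" "\<And>i. i < n \<Longrightarrow> g i > 0" "(\<Sum>i<n. ln (f i / g i)) \<le> s"
  shows "(\<Prod>i<n. f i) \<le> exp s * (\<Prod>i<n. g i)"
proof -
  have "(\<Prod>i<n. f i) / (\<Prod>i<n. g i) = exp (\<Sum>i<n. ln (f i / g i))"
    using assms by (simp add: prod_dividef[symmetric] exp_sum)
  also have "\<dots> \<le> exp s"
    using assms by simp
  finally have "(\<Prod>i<n. f i) / (\<Prod>i<n. g i) \<le> exp s" .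
  moreover have "(\<Prod>i<n. g i) > 0"
    using assms by (intro prod_pos) auto
  ultimately show ?thesis
    by (simp add: divide_le_eq)
qed

locale joint_type = prob_channel P W
  for P :: "'x::finite \<Rightarrow> real" and W :: "'x \<Rightarrow> 'y::finite \<Rightarrow> real" +
  fixes Q :: "'y \<Rightarrow> 'x \<Rightarrow> real"
  assumes Q_joint: "Q \<in> joint_dists P W"
begin

lemma Q_nonneg: "Q y x \<ge> 0"
  using Q_joint by (simp add: joint_dists_def)

lemma sum_Q: "(\<Sum>y\<in>UNIV. \<Sum>x\<in>UNIV. Q y x) = 1"
  using Q_joint by (simp add: joint_dists_def)

lemma P_pos_if_Q_pos: "Q y x > 0 \<Longrightarrow> P x > 0"
  and W_pos_if_Q_pos: "Q y x > 0 \<Longrightarrow> W x y > 0"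
proof -
  assume "Q y x > 0"
  then have "P x * W x y > 0"
    using Q_joint by (simp add: joint_dists_def)
  then show "P x > 0" "W x y > 0"
    using P_nonneg[of x] W_nonneg[of x y] by (simp_all add: zero_less_mult_iff)
qed

text \<open>marg and cond are T and V of the paper; cond y x = 0 when marg y = 0.\<close>

definition marg :: "'y \<Rightarrow> real" where
  "marg y = (\<Sum>x\<in>UNIV. Q y x)"

definition cond :: "'y \<Rightarrow> 'x \<Rightarrow> real" where
  "cond y x = Q y x / marg y"

lemma cond_pos_if_Q_pos: "Q y x > 0 \<Longrightarrow> cond y x > 0"
  unfolding cond_def marg_def
  by (metis Q_nonneg UNIV_I divide_pos_pos finite_class.finite_UNIV order_less_le_trans sum_nonneg_leq_bound)

lemma cond_nonneg: "cond y x \<ge> 0"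
  by (simp add: cond_def marg_def Q_nonneg sum_nonneg)

lemma sum_memoryless_cond_le_1: "(\<Sum>x\<in>seqs n. memoryless cond n v x) \<le> 1"
proof -
  have "(\<Sum>a\<in>UNIV. cond y a) = (if marg y = 0 then 0 else 1)" for y
    by (simp add: cond_def sum_divide_distrib[symmetric] marg_def[symmetric])
  then show ?thesis
    by (simp add: sum_memoryless prod_le_1)
qed

definition dens_D :: "'y \<Rightarrow> 'x \<Rightarrow> real" where
  "dens_D y x = ln (Q y x / (P x * W x y))"

definition dens_A :: "'y \<Rightarrow> 'x \<Rightarrow> real" where
  "dens_A y x = ln (cond y x / P x)"

definition dens_B :: "'y \<Rightarrow> 'x \<Rightarrow> real" where
  "dens_B y x = - ln (W x y)"

lemma divKL_eq_mean: "divKL P W Q = (\<Sum>y\<in>UNIV. \<Sum>x\<in>UNIV. if Q y x > 0 then Q y x * dens_D y x else 0)"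
  unfolding divKL_def dens_D_def ..

lemma A_TV_eq_mean: "A_TV P Q = (\<Sum>y\<in>UNIV. \<Sum>x\<in>UNIV. if Q y x > 0 then Q y x * dens_A y x else 0)"
  unfolding A_TV_def dens_A_def cond_def marg_def ..

lemma B_TV_eq_mean: "B_TV W Q = (\<Sum>y\<in>UNIV. \<Sum>x\<in>UNIV. if Q y x > 0 then Q y x * dens_B y x else 0)"
  unfolding B_TV_def dens_B_def ..

definition typical :: "nat \<Rightarrow> real \<Rightarrow> 'y list \<Rightarrow> 'x list \<Rightarrow> bool" where
  "typical n d v x \<longleftrightarrow> (\<forall>i<n. Q (v ! i) (x ! i) > 0) \<and>
     \<bar>(\<Sum>i<n. dens_D (v ! i) (x ! i)) - real n * divKL P W Q\<bar> < real n * d \<and>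
     \<bar>(\<Sum>i<n. dens_A (v ! i) (x ! i)) - real n * A_TV P Q\<bar> < real n * d \<and>
     \<bar>(\<Sum>i<n. dens_B (v ! i) (x ! i)) - real n * B_TV W Q\<bar> < real n * d"

context
  fixes n d v x
  assumes vx_typical: "typical n d v x"
begin

lemma typical_Q_pos: "i < n \<Longrightarrow> Q (v ! i) (x ! i) > 0"
  using vx_typical by (simp add: typical_def)

lemma iid_le_typical: "iid P n x \<le> exp (real n * (d - A_TV P Q)) * memoryless cond n v x"
  unfolding iid_def memoryless_def
proof (rule prod_le_exp_mult_prod)
  fix i assume "i < n"
  then show "P (x ! i) > 0" "cond (v ! i) (x ! i) > 0"
    using typical_Q_pos P_pos_if_Q_pos cond_pos_if_Q_pos by blast+
next
  have "ln (P (x ! i) / cond (v ! i) (x ! i)) = - dens_A (v ! i) (x ! i)" if "i < n" for i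
    using P_pos_if_Q_pos cond_pos_if_Q_pos typical_Q_pos[OF that] by (simp add: dens_A_def ln_div)
  then show "(\<Sum>i<n. ln (P (x ! i) / cond (v ! i) (x ! i))) \<le> real n * (d - A_TV P Q)"
    using vx_typical by (simp add: typical_def sum_negf algebra_simps abs_less_iff)
qed

lemma memoryless_W_le_typical: "memoryless W n x v \<le> exp (real n * (d - B_TV W Q))"
proof -
  have "memoryless W n x v \<le> exp (real n * (d - B_TV W Q)) * (\<Prod>i<n. 1)"
    unfolding memoryless_def
  proof (rule prod_le_exp_mult_prod)
    show "W (x ! i) (v ! i) > 0" if "i < n" for i
      using typical_Q_pos[OF that] W_pos_if_Q_pos by blast
    then show "(\<Sum>i<n. ln (W (x ! i) (v ! i) / 1)) \<le> real n * (d - B_TV W Q)"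
      using vx_typical by (simp add: typical_def dens_B_def sum_negf algebra_simps abs_less_iff)
  qed simp
  then show ?thesis
    by simp
qed

lemma memoryless_Q_le_typical:
  "memoryless Q n v x \<le> exp (real n * (divKL P W Q + d)) * (iid P n x * memoryless W n x v)"
  unfolding iid_def memoryless_def prod.distrib[symmetric]
proof (rule prod_le_exp_mult_prod)
  fix i assume "i < n"
  then show "Q (v ! i) (x ! i) > 0" "P (x ! i) * W (x ! i) (v ! i) > 0"
    using typical_Q_pos P_pos_if_Q_pos W_pos_if_Q_pos mult_pos_pos by blast+
next
  show "(\<Sum>i<n. ln (Q (v ! i) (x ! i) / (P (x ! i) * W (x ! i) (v ! i)))) \<le> real n * (divKL P W Q + d)"
    using vx_typical by (simp add: typical_def dens_D_def algebra_simps abs_less_iff)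
qed

end

text \<open>The densities are junk off the support of Q (logarithms of 0), so they are centred only on it.\<close>

definition centered :: "('y \<Rightarrow> 'x \<Rightarrow> real) \<Rightarrow> real \<Rightarrow> 'y \<times> 'x \<Rightarrow> real" where
  "centered f \<mu> z = (if case_prod Q z > 0 then case_prod f z - \<mu> else 0)"

lemma sum_Q_centered:
  assumes "\<mu> = (\<Sum>y\<in>UNIV. \<Sum>x\<in>UNIV. if Q y x > 0 then Q y x * f y x else 0)"
  shows "(\<Sum>z\<in>UNIV. case_prod Q z * centered f \<mu> z) = 0"
proof -
  have "case_prod Q z * centered f \<mu> z
      = (if case_prod Q z > 0 then case_prod Q z * case_prod f z else 0) - \<mu> * case_prod Q z" for z
    using Q_nonneg[of "fst z" "snd z"] by (cases z) (auto simp: centered_def algebra_simps)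
  then have "(\<Sum>z\<in>UNIV. case_prod Q z * centered f \<mu> z)
      = (\<Sum>z\<in>UNIV. if case_prod Q z > 0 then case_prod Q z * case_prod f z else 0) - \<mu> * (\<Sum>z\<in>UNIV. case_prod Q z)"
    by (simp only: sum_subtractf sum_distrib_left)
  also have "\<dots> = 0"
    by (simp only: sum_UNIV_pair prod.case sum_Q assms)
  finally show ?thesis .
qed

lemma sum_centered:
  assumes "zs \<in> seqs n" "\<And>i. i < n \<Longrightarrow> case_prod Q (zs ! i) > 0"
  shows "(\<Sum>i<n. centered f \<mu> (zs ! i)) = (\<Sum>i<n. f (map fst zs ! i) (map snd zs ! i)) - real n * \<mu>"
  using assms by (simp add: centered_def seqs_def sum_subtractf split_def)

lemma memoryless_Q_unzip:
  "zs \<in> seqs n \<Longrightarrow> memoryless Q n (map fst zs) (map snd zs) = iid (case_prod Q) n zs"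
  by (auto simp: memoryless_def iid_def seqs_def split_def intro!: prod.cong)

definition centered_dens :: "nat \<Rightarrow> 'y \<times> 'x \<Rightarrow> real" where
  "centered_dens k = (if k = 0 then centered dens_D (divKL P W Q)
     else if k = 1 then centered dens_A (A_TV P Q) else centered dens_B (B_TV W Q))"

lemma sum_Q_centered_dens: "(\<Sum>z\<in>UNIV. case_prod Q z * centered_dens k z) = 0"
  using sum_Q_centered[OF divKL_eq_mean] sum_Q_centered[OF A_TV_eq_mean] sum_Q_centered[OF B_TV_eq_mean]
  by (simp add: centered_dens_def)

lemma iid_not_typical_le:
  assumes zs: "zs \<in> seqs n"
  shows "iid (case_prod Q) n zs * (1 - of_bool (typical n d (map fst zs) (map snd zs)))
    \<le> iid (case_prod Q) n zs * (\<Sum>k<3. of_bool (real n * d \<le> \<bar>\<Sum>i<n. centered_dens k (zs ! i)\<bar>))"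
proof (cases "\<forall>i<n. case_prod Q (zs ! i) > 0")
  case True
  let ?dev = "\<lambda>k. of_bool (real n * d \<le> \<bar>\<Sum>i<n. centered_dens k (zs ! i)\<bar>) :: real"
  have "\<forall>i<n. Q (map fst zs ! i) (map snd zs ! i) > 0"
    using True zs by (simp add: seqs_def split_def)
  then have "1 - of_bool (typical n d (map fst zs) (map snd zs)) \<le> ?dev 0 + ?dev 1 + ?dev 2"
    using True zs by (auto simp: typical_def centered_dens_def sum_centered not_less)
  also have "\<dots> = (\<Sum>k<3. ?dev k)"
    by (simp add: numeral_2_eq_2 numeral_3_eq_3)
  finally show ?thesis
    by (intro mult_left_mono iid_nonneg) (auto simp: Q_nonneg)
next
  case False
  then have "iid (case_prod Q) n zs = 0"
    using Q_nonneg by (auto simp: iid_def less_le split_def)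
  then show ?thesis
    by simp
qed

lemma eventually_typical_ge_half:
  assumes "d > 0"
  shows "\<forall>\<^sub>F n in sequentially. 1 / 2 \<le> (\<Sum>v\<in>seqs n. \<Sum>x\<in>seqs n. memoryless Q n v x * of_bool (typical n d v x))"
proof -
  let ?q = "case_prod Q"
  have q_nonneg: "?q z \<ge> 0" for z
    by (cases z) (simp add: Q_nonneg)
  have sum_q: "(\<Sum>z\<in>UNIV. ?q z) = 1"
    by (simp add: sum_UNIV_pair sum_Q)
  define \<sigma> where "\<sigma> = (\<Sum>k<3. \<Sum>z\<in>UNIV. ?q z * (centered_dens k z)\<^sup>2)"
  have "\<forall>\<^sub>F n in sequentially. \<sigma> / d\<^sup>2 / real n < 1 / 2"
    using order_tendstoD(2)[OF lim_const_over_n[of "\<sigma> / d\<^sup>2"], of "1 / 2"] by simp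
  then show ?thesis
    using eventually_gt_at_top[of 0]
  proof eventually_elim
    case (elim n)
    let ?dev = "\<lambda>k zs. of_bool (real n * d \<le> \<bar>\<Sum>i<n. centered_dens k (zs ! i)\<bar>) :: real"
    have "(\<Sum>v\<in>seqs n. \<Sum>x\<in>seqs n. memoryless Q n v x * of_bool (typical n d v x))
        = (\<Sum>zs\<in>seqs n. iid ?q n zs * of_bool (typical n d (map fst zs) (map snd zs)))"
      by (simp only: sum_seqs_pairs) (intro sum.cong refl, simp add: memoryless_Q_unzip)
    then have "1 - (\<Sum>v\<in>seqs n. \<Sum>x\<in>seqs n. memoryless Q n v x * of_bool (typical n d v x))
        = (\<Sum>zs\<in>seqs n. iid ?q n zs * (1 - of_bool (typical n d (map fst zs) (map snd zs))))"
      by (simp only: right_diff_distrib mult_1_right sum_subtractf sum_iid sum_q power_one)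
    also have "\<dots> \<le> (\<Sum>zs\<in>seqs n. iid ?q n zs * (\<Sum>k<3. ?dev k zs))"
      by (rule sum_mono) (rule iid_not_typical_le)
    also have "\<dots> = (\<Sum>k<3. \<Sum>zs\<in>seqs n. iid ?q n zs * ?dev k zs)"
      by (simp only: sum_distrib_left) (rule sum.swap)
    also have "\<dots> \<le> (\<Sum>k<3. (\<Sum>z\<in>UNIV. ?q z * (centered_dens k z)\<^sup>2) / (real n * d\<^sup>2))"
      using elim \<open>d > 0\<close> by (intro sum_mono iid_chebyshev sum_q sum_Q_centered_dens q_nonneg) auto
    also have "\<dots> = \<sigma> / d\<^sup>2 / real n"
      by (simp add: \<sigma>_def sum_divide_distrib mult.commute)
    finally show ?case
      using elim by linarith
  qed
qed

lemma input_mass_typical_le: "input_mass n (typical n d) w \<le> exp (real n * (d - A_TV P Q))"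
proof -
  have "input_mass n (typical n d) w \<le> (\<Sum>x\<in>seqs n. exp (real n * (d - A_TV P Q)) * memoryless cond n w x)"
    unfolding input_mass_def
    by (intro sum_mono) (simp add: iid_le_typical memoryless_nonneg cond_nonneg)
  also have "\<dots> \<le> exp (real n * (d - A_TV P Q))"
    using sum_memoryless_cond_le_1[of n w] by (simp add: sum_distrib_left[symmetric])
  finally show ?thesis .
qed

lemma joint_mass_typical_le:
  "joint_mass n (typical n d) w \<le> exp (real n * (d - B_TV W Q)) * input_mass n (typical n d) w"
  unfolding joint_mass_def input_mass_def sum_distrib_left
proof (intro sum_mono)
  fix x
  show "iid P n x * of_bool (typical n d w x) * memoryless W n x w
      \<le> exp (real n * (d - B_TV W Q)) * (iid P n x * of_bool (typical n d w x))"
    using memoryless_W_le_typical[of n d w x] iid_nonneg[of P n x] P_nonneg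
    by (simp add: mult_left_mono mult.commute)
qed

lemma sum_joint_mass_typical_ge:
  "exp (- (real n * (divKL P W Q + d))) * (\<Sum>v\<in>seqs n. \<Sum>x\<in>seqs n. memoryless Q n v x * of_bool (typical n d v x))
    \<le> (\<Sum>w\<in>seqs n. joint_mass n (typical n d) w)"
  unfolding joint_mass_def sum_distrib_left
proof (intro sum_mono)
  fix v x
  show "exp (- (real n * (divKL P W Q + d))) * (memoryless Q n v x * of_bool (typical n d v x))
      \<le> iid P n x * of_bool (typical n d v x) * memoryless W n x v"
  proof (cases "typical n d v x")
    case True
    have "exp (- (real n * (divKL P W Q + d))) * memoryless Q n v x
        \<le> exp (- (real n * (divKL P W Q + d))) * exp (real n * (divKL P W Q + d)) * (iid P n x * memoryless W n x v)"
      using memoryless_Q_le_typical[OF True] by (simp add: mult.assoc)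
    then show ?thesis
      using True by (simp flip: exp_add)
  qed simp
qed

lemma min_mass_typical_le:
  fixes L :: nat
  assumes "L \<le> exp (real n * K)" "d > 0"
  shows "min (L * joint_mass n (typical n d) w) (input_mass n (typical n d) w)
    \<le> exp (real n * (2 * d - A_TV P Q - pos (B_TV W Q - K)))"
proof (cases "B_TV W Q \<le> K")
  case True
  have "exp (real n * (d - A_TV P Q)) \<le> exp (real n * (2 * d - A_TV P Q - pos (B_TV W Q - K)))"
    using True \<open>d > 0\<close> by (simp add: pos_def mult_left_mono)
  then show ?thesis
    using input_mass_typical_le[of n d w] by linarith
next
  case False
  have "L * joint_mass n (typical n d) w
      \<le> exp (real n * K) * (exp (real n * (d - B_TV W Q)) * exp (real n * (d - A_TV P Q)))"
    using assms joint_mass_typical_le[of n d w] input_mass_typical_le[of n d w]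
    by (intro mult_mono) (auto intro: order_trans mult_left_mono simp: joint_mass_nonneg)
  also have "\<dots> = exp (real n * (2 * d - A_TV P Q - pos (B_TV W Q - K)))"
    using False by (simp add: pos_def flip: exp_add) (simp add: algebra_simps)
  finally show ?thesis
    by simp
qed

lemma competition_le:
  fixes M L :: nat
  assumes "M \<le> exp (real n * R)" "L \<le> exp (real n * K)" "d > 0"
  shows "1 + M * min (L * joint_mass n (typical n d) w) (input_mass n (typical n d) w)
    \<le> 2 * exp (real n * (pos (R - A_TV P Q - pos (B_TV W Q - K)) + 2 * d))"
proof -
  let ?t = "R - A_TV P Q - pos (B_TV W Q - K)"
  have "M * min (L * joint_mass n (typical n d) w) (input_mass n (typical n d) w)
      \<le> exp (real n * R) * exp (real n * (2 * d - A_TV P Q - pos (B_TV W Q - K)))"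
    using assms min_mass_typical_le[OF assms(2,3)]
    by (intro mult_mono) (auto simp: joint_mass_nonneg input_mass_nonneg)
  also have "\<dots> = exp (real n * (?t + 2 * d))"
    by (simp add: algebra_simps flip: exp_add)
  also have "\<dots> \<le> exp (real n * (pos ?t + 2 * d))"
    by (simp add: pos_def mult_left_mono)
  moreover have "1 \<le> exp (real n * (pos ?t + 2 * d))"
    using \<open>d > 0\<close> by (simp add: pos_def)
  ultimately show ?thesis
    by linarith
qed

end

subsection \<open>The exponent of correct decoding\<close>

lemma nat_floor_exp_bounds:
  assumes "t \<ge> 0"
  shows "nat \<lfloor>exp t\<rfloor> \<ge> 1" "real (nat \<lfloor>exp t\<rfloor>) \<le> exp t"
  using assms by (simp_all add: le_nat_floor)

lemma limsup_neg_ln_div_le: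
  fixes s :: "nat \<Rightarrow> real"
  assumes "c > 0" and "\<forall>\<^sub>F n in sequentially. c * exp (- real n * E) \<le> s n"
  shows "limsup (\<lambda>n. ereal (- ln (s n) / real n)) \<le> ereal E"
proof -
  have "\<forall>\<^sub>F n in sequentially. ereal (- ln (s n) / real n) \<le> ereal (E - ln c / real n)"
    using assms(2) eventually_gt_at_top[of 0]
  proof eventually_elim
    case (elim n)
    have "s n > 0"
      using elim(1) \<open>c > 0\<close> by (metis exp_gt_zero mult_pos_pos order_less_le_trans)
    then have "ln (c * exp (- real n * E)) \<le> ln (s n)"
      using elim(1) \<open>c > 0\<close> by (subst ln_le_cancel_iff) auto
    then have "- ln (s n) \<le> real n * E - ln c"
      using \<open>c > 0\<close> by (simp add: ln_mult)
    then show ?case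
      using elim by (simp add: field_simps)
  qed
  then have "limsup (\<lambda>n. ereal (- ln (s n) / real n)) \<le> limsup (\<lambda>n. ereal (E - ln c / real n))"
    by (rule Limsup_mono)
  also have "\<dots> = ereal E"
    using tendsto_diff[OF tendsto_const lim_const_over_n, of E "ln c"]
    by (intro lim_imp_Limsup) simp_all
  finally show ?thesis .
qed

lemma ereal_le_cInf:
  assumes "S \<noteq> {}" "\<And>s. s \<in> S \<Longrightarrow> x \<le> ereal s"
  shows "x \<le> ereal (Inf S)"
proof (cases x)
  case (real r)
  then have "r \<le> Inf S"
    using assms by (intro cInf_greatest) auto
  then show ?thesis
    using real by simp
qed (use assms in auto)

lemma (in prob_channel) product_in_joint_dists: "(\<lambda>y x. P x * W x y) \<in> joint_dists P W"
proof -
  have "(\<Sum>y\<in>UNIV. \<Sum>x\<in>UNIV. P x * W x y) = (\<Sum>x\<in>UNIV. P x * (\<Sum>y\<in>UNIV. W x y))"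
    by (subst sum.swap) (simp add: sum_distrib_left)
  then show ?thesis
    by (simp add: joint_dists_def P_nonneg W_nonneg sum_P sum_W)
qed

context joint_type
begin

lemma succ_prob_ge_typical:
  assumes "R \<ge> 0" "K \<ge> 0" "d > 0"
    and half: "1 / 2 \<le> (\<Sum>v\<in>seqs n. \<Sum>x\<in>seqs n. memoryless Q n v x * of_bool (typical n d v x))"
  shows "exp (- real n * (divKL P W Q + pos (R - A_TV P Q - pos (B_TV W Q - K)) + 3 * d)) / 4
    \<le> succ_prob P W R K n"
proof -
  define M where "M = nmsg R n"
  define L where "L = ncloud K n"
  have M: "M \<ge> 1" "M \<le> exp (real n * R)"
    unfolding M_def nmsg_def using nat_floor_exp_bounds[of "real n * R"] \<open>R \<ge> 0\<close> by simp_all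
  have L: "L \<ge> 1" "L \<le> exp (real n * K)"
    unfolding L_def ncloud_def using nat_floor_exp_bounds[of "real n * K"] \<open>K \<ge> 0\<close> by simp_all
  let ?\<mu> = "joint_mass n (typical n d)" and ?p = "input_mass n (typical n d)"
  define Den where "Den = 2 * exp (real n * (pos (R - A_TV P Q - pos (B_TV W Q - K)) + 2 * d))"
  have "exp (- real n * (divKL P W Q + pos (R - A_TV P Q - pos (B_TV W Q - K)) + 3 * d)) / 4
      = exp (- (real n * (divKL P W Q + d))) * (1 / 2) / Den"
    by (simp add: Den_def algebra_simps flip: exp_add exp_diff)
  also have "\<dots> \<le> (\<Sum>w\<in>seqs n. ?\<mu> w) / Den"
  proof (rule divide_right_mono)
    show "exp (- (real n * (divKL P W Q + d))) * (1 / 2) \<le> (\<Sum>w\<in>seqs n. ?\<mu> w)"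
      using mult_left_mono[OF half exp_ge_zero, of "- (real n * (divKL P W Q + d))"]
        sum_joint_mass_typical_ge[of n d] by linarith
  qed (simp add: Den_def)
  also have "\<dots> \<le> (\<Sum>w\<in>seqs n. ?\<mu> w / (1 + real M * min (real L * ?\<mu> w) (?p w)))"
    unfolding sum_divide_distrib Den_def
    by (intro sum_mono divide_left_mono competition_le M L \<open>d > 0\<close> joint_mass_nonneg mult_pos_pos add_pos_nonneg)
      (simp_all add: joint_mass_nonneg input_mass_nonneg)
  also have "\<dots> \<le> succ_prob P W R K n"
    using ensemble_expect_ml_correct_ge[OF M(1) L(1), of n "typical n d"] M(1) L(1)
    by (simp add: succ_prob_eq_ensemble_expect flip: M_def L_def) (simp add: field_simps)
  finally show ?thesis .
qed

lemma limsup_le_exponent: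
  assumes "R \<ge> 0" "K \<ge> 0"
  shows "limsup (\<lambda>n. ereal (- ln (1 - err_prob P W R K n) / real n))
    \<le> ereal (divKL P W Q + pos (R - A_TV P Q - pos (B_TV W Q - K)))"
proof (rule ereal_le_epsilon2)
  fix e :: real
  assume "e > 0"
  have "\<forall>\<^sub>F n in sequentially.
      1 / 2 \<le> (\<Sum>v\<in>seqs n. \<Sum>x\<in>seqs n. memoryless Q n v x * of_bool (typical n (e / 3) v x))"
    using eventually_typical_ge_half[of "e / 3"] \<open>e > 0\<close> by simp
  then have "\<forall>\<^sub>F n in sequentially.
      1 / 4 * exp (- real n * (divKL P W Q + pos (R - A_TV P Q - pos (B_TV W Q - K)) + e)) \<le> 1 - err_prob P W R K n"
  proof (rule eventually_mono)
    fix n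
    assume "1 / 2 \<le> (\<Sum>v\<in>seqs n. \<Sum>x\<in>seqs n. memoryless Q n v x * of_bool (typical n (e / 3) v x))"
    from succ_prob_ge_typical[OF assms _ this] \<open>e > 0\<close>
    show "1 / 4 * exp (- real n * (divKL P W Q + pos (R - A_TV P Q - pos (B_TV W Q - K)) + e))
        \<le> 1 - err_prob P W R K n"
      by (simp add: err_prob_def)
  qed
  then show "limsup (\<lambda>n. ereal (- ln (1 - err_prob P W R K n) / real n))
      \<le> ereal (divKL P W Q + pos (R - A_TV P Q - pos (B_TV W Q - K))) + ereal e"
    using limsup_neg_ln_div_le[of "1 / 4"] by simp
qed

end

theorem lemma11:
  fixes P :: "'x::finite \<Rightarrow> real" and W :: "'x \<Rightarrow> 'y::finite \<Rightarrow> real" and R K :: real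
  assumes "\<forall>x. P x \<ge> 0" and "(\<Sum>x\<in>UNIV. P x) = 1"
    and "\<forall>x y. W x y \<ge> 0" and "\<forall>x. (\<Sum>y\<in>UNIV. W x y) = 1"
    and "R > 0" and "K > 0"
  shows "limsup (\<lambda>n. ereal (- ln (1 - err_prob P W R K n) / real n)) \<le> ereal (Ec P W R K)"
proof -
  interpret prob_channel P W
    using assms(1-4) by unfold_locales auto
  have "limsup (\<lambda>n. ereal (- ln (1 - err_prob P W R K n) / real n))
      \<le> ereal (divKL P W Q + pos (R - A_TV P Q - pos (B_TV W Q - K)))" if "Q \<in> joint_dists P W" for Q
  proof -
    interpret joint_type P W Q
      using that by unfold_locales
    show ?thesis
      using limsup_le_exponent assms(5,6) by simp
  qed
  then show ?thesis
    unfolding Ec_def using product_in_joint_dists by (intro ereal_le_cInf) auto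
qed

end
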